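(* In the Markov decision process setting below, assume (H0), (H1), (H2) hold for the associated fixed-point problem. Then for any $v^0\in\mathbb{R}^M$, the iterates $(v^\ell)_{\ell\ge1}$ of policy iteration converge to the vector $v\in\mathbb{R}^M$ with components $$v_i=\sup_{P\in\mathcal{P}}\mathbb{E}\Big[\sum_{n=0}^\infty U(X^n,P)\prod_{m=0}^{n-1}D(X^m,P)\,\Big|\,X^0=i\Big],\quad 1\le i\le M.$$
   Context: MDP setting: $\rho>0$; $\mathcal{P}=\prod_i(\mathcal{W}_i\times\mathcal{Z}_i\times\mathcal{D}_i)$ with $\mathcal{D}_i$ nonempty subsets of $\{0,1\}$ and $\mathcal{W}_i,\mathcal{Z}_i$ nonempty sets of probability vectors in $\mathbb{R}^M$ (nonnegative entries summing to 1); functions $c_i:\mathcal{W}_i\to\mathbb{R}$, $k_i:\mathcal{Z}_i\to\mathbb{R}$. For $P=(w,z,\psi)\in\mathcal{P}$, $(X^n)_{n\ge0}$ is the homogeneous Markov chain on $\{1,\dots,M\}$ with $\mathbb{P}(X^{n+1}=j\mid X^n=i)=w_{ij}$ if $\psi_i=0$ and $=z_{ij}$ if $\psi_i=1$; $U(i,P)=c_i(w_i)$ if $\psi_i=0$, $=k_i(z_i)$ if $\psi_i=1$; $D(i,P)=1/(1+\rho)$ if $\psi_i=0$, $=1$ if $\psi_i=1$. Associated fixed-point problem: $[L(w)]_{ij}=w_{ij}/(1+\rho)$, $[B(z)]_{ij}=z_{ij}$, $[c(w)]_i=c_i(w_i)$, $[k(z)]_i=k_i(z_i)$, and for some $\delta>0$,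 $A(P)=(I-\Psi)(I-L(w))+\delta\Psi(I-B(z))$, $b(P)=(I-\Psi)c(w)+\delta\Psi k(z)$, $\Psi=\operatorname{diag}(\psi)$; order and suprema componentwise. Policy iteration: given $v^0$, for $\ell\ge1$ choose $P^\ell$ with $-A(P^\ell)v^{\ell-1}+b(P^\ell)=\sup_{P}\{-A(P)v^{\ell-1}+b(P)\}$ and let $v^\ell$ solve $A(P^\ell)v^\ell=b(P^\ell)$. (H0): $P\mapsto A(P)^{-1}$ is bounded on $\{P: A(P)\text{ nonsingular}\}$. (H1): (i) $A,b$ bounded on $\mathcal{P}$; (ii) for every $x$ the supremum $\sup_P\{-A(P)x+b(P)\}$ is attained by some $P_x\in\mathcal{P}$. (H2): for each $P=(w,z,\psi)$ and each $i$ with $\psi_i=1$ there is a path in the directed graph of $B(z)$ (edge $i\to j$ iff $[B(z)]_{ij}\ne0$; trivial paths allowed) from $i$ to some $j$ with $\psi_j=0$. *)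

theory Defs
  imports "HOL-Analysis.Analysis" "HOL-Probability.Probability"
begin

text \<open>States are the elements of a finite type 'm (playing the role of 1..M).
A policy P = (w, z, psi): w and z are matrices whose i-th rows are w_i and z_i,
psi is the vector of switching decisions (entries in {0,1}).\<close>

type_synonym 'm policy = "(real^'m^'m) \<times> (real^'m^'m) \<times> (real^'m)"

definition prob_vec :: "real^'m::finite \<Rightarrow> bool" where
  "prob_vec p \<longleftrightarrow> (\<forall>j. 0 \<le> p$j) \<and> (\<Sum>j\<in>UNIV. p$j) = 1"

definition policies ::
  "('m::finite \<Rightarrow> (real^'m) set) \<Rightarrow> ('m \<Rightarrow> (real^'m) set) \<Rightarrow> ('m \<Rightarrow> real set) \<Rightarrow> 'm policy set" where
  "policies W Z Ds = {(w, z, \<psi>). \<forall>i. w$i \<in> W i \<and> z$i \<in> Z i \<and> \<psi>$i \<in> Ds i}"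

definition Lmat :: "real \<Rightarrow> real^'m::finite^'m \<Rightarrow> real^'m^'m" where
  "Lmat \<rho> w = (\<chi> i j. w$i$j / (1 + \<rho>))"

definition Bmat :: "real^'m::finite^'m \<Rightarrow> real^'m^'m" where
  "Bmat z = (\<chi> i j. z$i$j)"

definition Psi :: "real^'m::finite \<Rightarrow> real^'m^'m" where
  "Psi \<psi> = (\<chi> i j. if i = j then \<psi>$i else 0)"

definition cvec :: "('m::finite \<Rightarrow> real^'m \<Rightarrow> real) \<Rightarrow> real^'m^'m \<Rightarrow> real^'m" where
  "cvec c w = (\<chi> i. c i (w$i))"

definition Amat :: "real \<Rightarrow> real \<Rightarrow> 'm::finite policy \<Rightarrow> real^'m^'m" where
  "Amat \<rho> \<delta> P = (case P of (w, z, \<psi>) \<Rightarrow>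
     (mat 1 - Psi \<psi>) ** (mat 1 - Lmat \<rho> w) + \<delta> *\<^sub>R (Psi \<psi> ** (mat 1 - Bmat z)))"

definition bvec :: "real \<Rightarrow> ('m::finite \<Rightarrow> real^'m \<Rightarrow> real) \<Rightarrow> ('m \<Rightarrow> real^'m \<Rightarrow> real)
    \<Rightarrow> 'm policy \<Rightarrow> real^'m" where
  "bvec \<delta> c k P = (case P of (w, z, \<psi>) \<Rightarrow>
     (mat 1 - Psi \<psi>) *v cvec c w + \<delta> *\<^sub>R (Psi \<psi> *v cvec k z))"

definition supv :: "'p set \<Rightarrow> ('p \<Rightarrow> real^'m::finite) \<Rightarrow> real^'m" where
  "supv S f = (\<chi> i. SUP P\<in>S. f P $ i)"

definition Uf :: "('m::finite \<Rightarrow> real^'m \<Rightarrow> real) \<Rightarrow> ('m \<Rightarrow> real^'m \<Rightarrow> real)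
    \<Rightarrow> 'm policy \<Rightarrow> 'm \<Rightarrow> real" where
  "Uf c k P i = (case P of (w, z, \<psi>) \<Rightarrow> if \<psi>$i = 0 then c i (w$i) else k i (z$i))"

definition Df :: "real \<Rightarrow> 'm::finite policy \<Rightarrow> 'm \<Rightarrow> real" where
  "Df \<rho> P i = (case P of (w, z, \<psi>) \<Rightarrow> if \<psi>$i = 0 then 1 / (1 + \<rho>) else 1)"

text \<open>Markov chain of policy P: transition row of state a, realised by the
random mapping representation X^{n+1} = G_n(X^n) with G_0, G_1, ... i.i.d.
random maps whose value at a is distributed according to row a.\<close>
definition trans_row :: "'m::finite policy \<Rightarrow> 'm \<Rightarrow> real^'m" where
  "trans_row P a = (case P of (w, z, \<psi>) \<Rightarrow> if \<psi>$a = 0 then w$a else z$a)"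

definition trans_pmf :: "'m::finite policy \<Rightarrow> 'm \<Rightarrow> 'm pmf" where
  "trans_pmf P a = embed_pmf (\<lambda>b. trans_row P a $ b)"

definition step_pmf :: "'m::finite policy \<Rightarrow> ('m \<Rightarrow> 'm) pmf" where
  "step_pmf P = Pi_pmf UNIV undefined (trans_pmf P)"

definition path_space :: "'m::finite policy \<Rightarrow> ('m \<Rightarrow> 'm) stream measure" where
  "path_space P = stream_space (measure_pmf (step_pmf P))"

primrec chain :: "'m \<Rightarrow> ('m \<Rightarrow> 'm) stream \<Rightarrow> nat \<Rightarrow> 'm" where
  "chain i \<omega> 0 = i"
| "chain i \<omega> (Suc n) = (\<omega> !! n) (chain i \<omega> n)"

definition mdp_value :: "real \<Rightarrow> ('m::finite \<Rightarrow> real^'m \<Rightarrow> real) \<Rightarrow> ('m \<Rightarrow> real^'m \<Rightarrow> real)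
    \<Rightarrow> 'm policy \<Rightarrow> 'm \<Rightarrow> real" where
  "mdp_value \<rho> c k P i = (\<integral>\<omega>. (\<Sum>n. Uf c k P (chain i \<omega> n) * (\<Prod>m<n. Df \<rho> P (chain i \<omega> m))) \<partial>path_space P)"

end

theory Submission
  imports Defs
begin

text \<open>Each matrix A(P) is monotone, i.e. A(P) x \<ge> 0 implies x \<ge> 0: a negative
minimum of such an x would have to be attained on a whole path of switching states, but
by (H2) that path ends in a state with \<psi> = 0, whose row of A(P) carries the strict discount
1/(1 + \<rho>). Monotonicity makes policy iteration increasing, since
A(P_(l+1)) (v_(l+1) - v_l) = sup_P (b(P) - A(P) v_l) \<ge> 0, and (H0) bounds the iterates, so they
converge to some v with sup_P (b(P) - A(P) v) = 0. By (H1) a maximiser P* gives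
A(P*) v = b(P*), while monotonicity shows that v dominates the solution of A(P) x = b(P)
for every P. That solution is the value of P: the expected discounted reward is the
Neumann series of the discounted transition operator, which converges geometrically
because, by the same path argument, every state leaves the switching region with
positive probability.\<close>

section \<open>Monotone matrices\<close>

lemma norm_matrix_vector_mult_le:
  fixes A :: "real^'n::finite^'m::finite"
  shows "norm (A *v x) \<le> real CARD('m) * norm A * norm x"
proof -
  have "norm (A *v x) \<le> (\<Sum>i\<in>UNIV. \<bar>(A *v x) $ i\<bar>)"
    by (rule norm_le_l1_cart)
  also have "\<dots> \<le> (\<Sum>i\<in>(UNIV::'m set). norm A * norm x)"
  proof (rule sum_mono)
    fix i
    have "\<bar>(A *v x) $ i\<bar> \<le> norm (A $ i) * norm x"
      by (simp add: matrix_mult_dot Cauchy_Schwarz_ineq2)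
    also have "\<dots> \<le> norm A * norm x"
      by (simp add: mult_right_mono Finite_Cartesian_Product.norm_nth_le)
    finally show "\<bar>(A *v x) $ i\<bar> \<le> norm A * norm x" .
  qed
  finally show ?thesis by simp
qed

lemma norm_matrix_vector_mult_bound:
  fixes A :: "real^'n::finite^'m::finite"
  assumes "norm A \<le> K" and "norm x \<le> L"
  shows "norm (A *v x) \<le> real CARD('m) * K * L"
proof -
  have "0 \<le> K"
    using assms(1) norm_ge_zero order_trans by blast
  then have "real CARD('m) * norm A * norm x \<le> real CARD('m) * K * L"
    using assms by (intro mult_mono mult_left_mono) auto
  then show ?thesis
    using norm_matrix_vector_mult_le[of A x] by linarith
qed

lemma tendsto_matrix_vector_mult_zero:
  fixes M :: "nat \<Rightarrow> real^'n::finite^'m::finite"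
  assumes "\<And>l. norm (M l) \<le> K" and "y \<longlonglongrightarrow> 0"
  shows "(\<lambda>l. M l *v y l) \<longlonglongrightarrow> 0"
proof (rule Lim_null_comparison)
  show "\<forall>\<^sub>F l in sequentially. norm (M l *v y l) \<le> real CARD('m) * K * norm (y l)"
    using assms(1) by (simp add: norm_matrix_vector_mult_bound)
  show "(\<lambda>l. real CARD('m) * K * norm (y l)) \<longlonglongrightarrow> 0"
    using assms(2) by (intro tendsto_mult_right_zero tendsto_norm_zero)
qed

lemma matrix_inv_left:
  fixes A :: "real^'n::finite^'n"
  assumes "invertible A"
  shows "matrix_inv A ** A = mat 1"
proof -
  have "\<exists>A'. A ** A' = mat 1 \<and> A' ** A = mat 1"
    using assms by (simp add: invertible_def)
  then show ?thesis
    unfolding matrix_inv_def by (rule someI2_ex) simp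
qed

lemma tendsto_le_vec:
  fixes f g :: "nat \<Rightarrow> real^'n::finite"
  assumes "f \<longlonglongrightarrow> a" and "g \<longlonglongrightarrow> b" and "\<And>l. f l \<le> g l"
  shows "a \<le> b"
  unfolding less_eq_vec_def
proof
  fix i
  show "a $ i \<le> b $ i"
    using assms(3) by (intro tendsto_le[OF _ tendsto_vec_nth[OF assms(2)] tendsto_vec_nth[OF assms(1)]])
      (auto simp: less_eq_vec_def)
qed

definition monotone_matrix :: "real^'n::finite^'n \<Rightarrow> bool" where
  "monotone_matrix A \<longleftrightarrow> (\<forall>x. 0 \<le> A *v x \<longrightarrow> 0 \<le> x)"

lemma monotone_matrixD: "monotone_matrix A \<Longrightarrow> 0 \<le> A *v x \<Longrightarrow> 0 \<le> x"
  by (simp add: monotone_matrix_def)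

lemma monotone_matrix_inj:
  assumes "monotone_matrix A" and "A *v x = A *v y"
  shows "x = y"
proof -
  have "0 \<le> A *v (x - y)" "0 \<le> A *v (y - x)"
    using assms(2) by (simp_all add: matrix_vector_mult_diff_distrib)
  then have "0 \<le> x - y" "0 \<le> y - x"
    using monotone_matrixD[OF assms(1)] by blast+
  then show ?thesis by (simp add: order_antisym)
qed

lemma monotone_matrix_invertible:
  assumes "monotone_matrix A"
  shows "invertible A"
proof -
  have "inj ((*v) A)"
    using monotone_matrix_inj[OF assms] by (auto intro: injI)
  then show ?thesis
    by (simp add: invertible_left_inverse matrix_left_invertible_injective)
qed

section \<open>Policy iteration for a family of monotone matrices\<close>

locale policy_iteration =
  fixes Pol :: "'p set"
    and A :: "'p \<Rightarrow> real^'m::finite^'m"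
    and b :: "'p \<Rightarrow> real^'m"
  assumes monotone_A: "Q \<in> Pol \<Longrightarrow> monotone_matrix (A Q)"
    and bounded_A: "bounded (A ` Pol)"
    and bounded_b: "bounded (b ` Pol)"
    and bounded_inverse: "bounded ((\<lambda>Q. matrix_inv (A Q)) ` Pol)"
    and sup_attained: "\<And>x. \<exists>Q\<in>Pol. - (A Q *v x) + b Q = supv Pol (\<lambda>Q. - (A Q *v x) + b Q)"
begin

definition residual :: "real^'m \<Rightarrow> 'p \<Rightarrow> real^'m" where
  "residual x Q = - (A Q *v x) + b Q"

lemma residual_diff: "residual x Q - residual y Q = A Q *v (y - x)"
  by (simp add: residual_def matrix_vector_mult_diff_distrib)

lemma residual_le_supv:
  assumes Q: "Q \<in> Pol"
  shows "residual x Q \<le> supv Pol (residual x)"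
proof -
  obtain KA where KA: "\<And>Q. Q \<in> Pol \<Longrightarrow> norm (A Q) \<le> KA"
    using bounded_A by (auto simp: bounded_iff)
  obtain Kb where Kb: "\<And>Q. Q \<in> Pol \<Longrightarrow> norm (b Q) \<le> Kb"
    using bounded_b by (auto simp: bounded_iff)
  have "residual x P $ i \<le> real CARD('m) * KA * norm x + Kb" if P: "P \<in> Pol" for P i
  proof -
    have "norm (A P *v x) \<le> real CARD('m) * KA * norm x"
      using KA[OF P] by (simp add: norm_matrix_vector_mult_bound)
    moreover have "norm (residual x P) \<le> norm (b P) + norm (A P *v x)"
      unfolding residual_def using norm_triangle_ineq4[of "b P" "A P *v x"] by simp
    ultimately have "norm (residual x P) \<le> real CARD('m) * KA * norm x + Kb"
      using Kb[OF P] by linarith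
    then show ?thesis
      using component_le_norm_cart[of "residual x P" i] by linarith
  qed
  then have "bdd_above ((\<lambda>P. residual x P $ i) ` Pol)" for i
    by (intro bdd_aboveI2) auto
  then show ?thesis
    using Q by (auto simp: less_eq_vec_def supv_def intro: cSUP_upper)
qed

lemma sup_residual_attained: "\<exists>Q\<in>Pol. residual x Q = supv Pol (residual x)"
  using sup_attained[of x] by (simp add: residual_def[abs_def])

lemma solution_unique:
  assumes "Q \<in> Pol" and "A Q *v x = b Q" and "A Q *v y = b Q"
  shows "x = y"
  using assms monotone_A monotone_matrix_inj by metis

end

locale policy_iteration_run = policy_iteration Pol A b
  for Pol :: "'p set" and A :: "'p \<Rightarrow> real^'m::finite^'m" and b +
  fixes Ps :: "nat \<Rightarrow> 'p" and vs :: "nat \<Rightarrow> real^'m"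
  assumes policy_in: "Ps (Suc l) \<in> Pol"
    and greedy: "residual (vs l) (Ps (Suc l)) = supv Pol (residual (vs l))"
    and evaluation: "A (Ps (Suc l)) *v vs (Suc l) = b (Ps (Suc l))"
begin

lemma improvement: "A (Ps (Suc l)) *v (vs (Suc l) - vs l) = supv Pol (residual (vs l))"
  using residual_diff[of "vs l" "Ps (Suc l)" "vs (Suc l)"] greedy[of l] evaluation[of l]
  by (simp add: residual_def)

lemma iterates_mono: "vs (Suc l) \<le> vs (Suc (Suc l))"
proof -
  have "0 = residual (vs (Suc l)) (Ps (Suc l))"
    using evaluation[of l] by (simp add: residual_def)
  also have "\<dots> \<le> supv Pol (residual (vs (Suc l)))"
    by (rule residual_le_supv[OF policy_in])
  also have "\<dots> = A (Ps (Suc (Suc l))) *v (vs (Suc (Suc l)) - vs (Suc l))"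
    by (rule improvement[symmetric])
  finally have "0 \<le> vs (Suc (Suc l)) - vs (Suc l)"
    by (rule monotone_matrixD[OF monotone_A[OF policy_in]])
  then show ?thesis
    by simp
qed

lemma iterates_bounded: "bounded (range (\<lambda>l. vs (Suc l)))"
proof -
  obtain Ki where Ki: "\<And>Q. Q \<in> Pol \<Longrightarrow> norm (matrix_inv (A Q)) \<le> Ki"
    using bounded_inverse by (auto simp: bounded_iff)
  obtain Kb where Kb: "\<And>Q. Q \<in> Pol \<Longrightarrow> norm (b Q) \<le> Kb"
    using bounded_b by (auto simp: bounded_iff)
  have "norm (vs (Suc l)) \<le> real CARD('m) * Ki * Kb" for l
  proof -
    let ?Q = "Ps (Suc l)"
    have "vs (Suc l) = (matrix_inv (A ?Q) ** A ?Q) *v vs (Suc l)"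
      by (simp add: matrix_inv_left monotone_matrix_invertible monotone_A policy_in)
    also have "\<dots> = matrix_inv (A ?Q) *v b ?Q"
      by (simp add: evaluation flip: matrix_vector_mul_assoc)
    finally show ?thesis
      using Ki[OF policy_in] Kb[OF policy_in] by (simp add: norm_matrix_vector_mult_bound)
  qed
  then show ?thesis
    by (auto simp: bounded_iff)
qed

lemma iterates_converge: "\<exists>v. vs \<longlonglongrightarrow> v"
proof -
  define v where "v = (\<chi> i. SUP l. vs (Suc l) $ i)"
  have "(\<lambda>l. vs (Suc l)) \<longlonglongrightarrow> v"
  proof (rule vec_tendstoI)
    fix i
    have "bounded ((\<lambda>v. v $ i) ` range (\<lambda>l. vs (Suc l)))"
      by (rule bounded_component_cart[OF iterates_bounded])
    then have "bdd_above (range (\<lambda>l. vs (Suc l) $ i))"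
      by (simp add: image_image bounded_imp_bdd_above)
    moreover have "incseq (\<lambda>l. vs (Suc l) $ i)"
      using iterates_mono by (intro incseq_SucI) (simp add: less_eq_vec_def)
    ultimately show "(\<lambda>l. vs (Suc l) $ i) \<longlonglongrightarrow> v $ i"
      unfolding v_def by (simp add: LIMSEQ_incseq_SUP)
  qed
  then show ?thesis
    using filterlim_sequentially_Suc by blast
qed

lemma residual_tendsto:
  assumes "vs \<longlonglongrightarrow> v"
  shows "(\<lambda>l. residual (vs l) Q) \<longlonglongrightarrow> residual v Q"
  unfolding residual_def
  by (intro tendsto_intros isCont_tendsto_compose[OF matrix_vector_mult_linear_continuous_at assms])

lemma sup_residual_tendsto_zero:
  assumes "vs \<longlonglongrightarrow> v"
  shows "(\<lambda>l. supv Pol (residual (vs l))) \<longlonglongrightarrow> 0"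
proof -
  obtain KA where KA: "\<And>Q. Q \<in> Pol \<Longrightarrow> norm (A Q) \<le> KA"
    using bounded_A by (auto simp: bounded_iff)
  have "(\<lambda>l. vs (Suc l) - vs l) \<longlonglongrightarrow> v - v"
    using assms by (intro tendsto_diff) (simp_all add: filterlim_sequentially_Suc)
  then have "(\<lambda>l. A (Ps (Suc l)) *v (vs (Suc l) - vs l)) \<longlonglongrightarrow> 0"
    by (intro tendsto_matrix_vector_mult_zero[of _ KA] KA policy_in) simp
  then show ?thesis
    by (simp add: improvement)
qed

lemma limit_residual_nonpos:
  assumes "vs \<longlonglongrightarrow> v" and "Q \<in> Pol"
  shows "residual v Q \<le> 0"
  using residual_tendsto[OF assms(1)] sup_residual_tendsto_zero[OF assms(1)]
  by (rule tendsto_le_vec) (rule residual_le_supv[OF assms(2)])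

lemma limit_sup_residual_nonneg:
  assumes "vs \<longlonglongrightarrow> v"
  shows "0 \<le> supv Pol (residual v)"
proof -
  obtain KA where KA: "\<And>Q. Q \<in> Pol \<Longrightarrow> norm (A Q) \<le> KA"
    using bounded_A by (auto simp: bounded_iff)
  have "(\<lambda>l. vs (Suc l) - v) \<longlonglongrightarrow> v - v"
    using assms by (intro tendsto_diff) (simp_all add: filterlim_sequentially_Suc)
  then have "(\<lambda>l. A (Ps (Suc l)) *v (vs (Suc l) - v)) \<longlonglongrightarrow> 0"
    by (intro tendsto_matrix_vector_mult_zero[of _ KA] KA policy_in) simp
  moreover have "A (Ps (Suc l)) *v (vs (Suc l) - v) = residual v (Ps (Suc l))" for l
    using residual_diff[of v "Ps (Suc l)" "vs (Suc l)"] evaluation[of l] by (simp add: residual_def)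
  ultimately have "(\<lambda>l. residual v (Ps (Suc l))) \<longlonglongrightarrow> 0"
    by simp
  then show ?thesis
    by (rule tendsto_le_vec[OF _ tendsto_const]) (rule residual_le_supv[OF policy_in])
qed

theorem policy_iteration_converges:
  assumes V: "\<And>Q. Q \<in> Pol \<Longrightarrow> A Q *v V Q = b Q"
  shows "vs \<longlonglongrightarrow> (\<chi> i. SUP Q\<in>Pol. V Q $ i)"
proof -
  obtain v where v: "vs \<longlonglongrightarrow> v"
    using iterates_converge by blast
  obtain Q0 where Q0: "Q0 \<in> Pol" "residual v Q0 = supv Pol (residual v)"
    using sup_residual_attained by blast
  have "residual v Q0 = 0"
    using limit_residual_nonpos[OF v Q0(1)] limit_sup_residual_nonneg[OF v] Q0(2)
    by (simp add: order_antisym)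
  then have V_Q0: "V Q0 = v"
    using solution_unique[OF Q0(1) V[OF Q0(1)]] by (simp add: residual_def)
  have V_le: "V Q \<le> v" if Q: "Q \<in> Pol" for Q
  proof -
    have "A Q *v (v - V Q) = - residual v Q"
      using residual_diff[of "V Q" Q v] V[OF Q] by (simp add: residual_def)
    then have "0 \<le> A Q *v (v - V Q)"
      using limit_residual_nonpos[OF v Q] by simp
    then have "0 \<le> v - V Q"
      by (rule monotone_matrixD[OF monotone_A[OF Q]])
    then show ?thesis
      by simp
  qed
  have "(SUP Q\<in>Pol. V Q $ i) = v $ i" for i
    using Q0(1) V_Q0 V_le by (intro cSup_eq_maximum) (auto simp: less_eq_vec_def)
  then show ?thesis
    using v by (simp add: vec_eq_iff)
qed

end

section \<open>Expected discounted rewards along the chain\<close>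

definition step_op :: "real \<Rightarrow> 'm::finite policy \<Rightarrow> ('m \<Rightarrow> real) \<Rightarrow> 'm \<Rightarrow> real" where
  "step_op \<rho> P f a = Df \<rho> P a * (\<Sum>j\<in>UNIV. trans_row P a $ j * f j)"

definition disc_reward ::
    "real \<Rightarrow> 'm::finite policy \<Rightarrow> ('m \<Rightarrow> real) \<Rightarrow> 'm \<Rightarrow> ('m \<Rightarrow> 'm) stream \<Rightarrow> nat \<Rightarrow> real" where
  "disc_reward \<rho> P g i \<omega> n = g (chain i \<omega> n) * (\<Prod>m<n. Df \<rho> P (chain i \<omega> m))"

lemma measurable_chain [measurable]:
  "(\<lambda>\<omega>. chain i \<omega> n) \<in> measurable (stream_space (measure_pmf (M :: ('m \<Rightarrow> 'm::finite) pmf))) (count_space UNIV)"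
proof (induction n)
  case (Suc n)
  have "(\<lambda>\<omega>. (\<omega> !! n) (chain i \<omega> n)) \<in> measurable (stream_space (measure_pmf M)) (count_space UNIV)"
  proof (rule measurable_compose_countable[OF _ Suc])
    fix a
    show "(\<lambda>\<omega>. (\<omega> !! n) a) \<in> measurable (stream_space (measure_pmf M)) (count_space UNIV)"
      by (rule measurable_compose[OF measurable_snth]) (simp add: measurable_def)
  qed
  then show ?case
    by simp
qed simp

lemma measurable_disc_reward [measurable]:
  "(\<lambda>\<omega>. disc_reward \<rho> P g i \<omega> n) \<in> borel_measurable (stream_space (measure_pmf M))"
  unfolding disc_reward_def by measurable

lemma chain_Stream: "chain i (x ## \<omega>) (Suc n) = chain (x i) \<omega> n"
  by (induction n) auto

lemma disc_reward_Stream: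
  "disc_reward \<rho> P g i (x ## \<omega>) (Suc n) = Df \<rho> P i * disc_reward \<rho> P g (x i) \<omega> n"
  by (simp only: disc_reward_def prod.lessThan_Suc_shift chain_Stream chain.simps(1)) simp

lemma Df_nonneg: "0 \<le> \<rho> \<Longrightarrow> 0 \<le> Df \<rho> P a"
  by (auto simp: Df_def split: prod.splits)

lemma Df_le_1: "0 \<le> \<rho> \<Longrightarrow> Df \<rho> P a \<le> 1"
  by (auto simp: Df_def split: prod.splits)

lemma step_op_diff: "step_op \<rho> P (\<lambda>j. f j - g j) a = step_op \<rho> P f a - step_op \<rho> P g a"
  by (simp add: step_op_def sum_subtractf right_diff_distrib)

lemma step_op_pow_diff:
  "(step_op \<rho> P ^^ n) (\<lambda>j. f j - g j) = (\<lambda>a. (step_op \<rho> P ^^ n) f a - (step_op \<rho> P ^^ n) g a)"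
  by (induction n) (auto simp: step_op_diff)

lemma step_op_cmult: "step_op \<rho> P (\<lambda>j. c * f j) a = c * step_op \<rho> P f a"
  by (simp add: step_op_def sum_distrib_left mult_ac)

lemma step_op_pow_cmult: "(step_op \<rho> P ^^ n) (\<lambda>j. c * f j) = (\<lambda>a. c * (step_op \<rho> P ^^ n) f a)"
  by (induction n) (auto simp: step_op_cmult)

context
  fixes P :: "'m::finite policy"
  assumes stochastic: "\<And>a. prob_vec (trans_row P a)"
begin

lemma trans_row_nonneg: "0 \<le> trans_row P a $ j"
  using stochastic[of a] by (simp add: prob_vec_def)

lemma pmf_trans_pmf: "pmf (trans_pmf P a) b = trans_row P a $ b"
  unfolding trans_pmf_def
proof (rule pmf_embed_pmf)
  show "(\<integral>\<^sup>+x. ennreal (trans_row P a $ x) \<partial>count_space UNIV) = 1"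
    using stochastic[of a] by (simp add: prob_vec_def nn_integral_count_space_finite)
qed (rule trans_row_nonneg)

lemma nn_integral_step_pmf:
  "(\<integral>\<^sup>+x. h (x a) \<partial>measure_pmf (step_pmf P)) = (\<Sum>j\<in>UNIV. ennreal (trans_row P a $ j) * h j)"
proof -
  have "map_pmf (\<lambda>f. f a) (step_pmf P) = trans_pmf P a"
    unfolding step_pmf_def by (subst Pi_pmf_component) auto
  then have "(\<integral>\<^sup>+x. h (x a) \<partial>measure_pmf (step_pmf P)) = (\<integral>\<^sup>+j. h j \<partial>measure_pmf (trans_pmf P a))"
    by (metis nn_integral_map_pmf)
  then show ?thesis
    by (simp add: nn_integral_measure_pmf nn_integral_count_space_finite pmf_trans_pmf)
qed

context
  fixes \<rho> :: real
  assumes rho: "0 \<le> \<rho>"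
begin

lemma step_op_mono: "(\<And>j. f j \<le> g j) \<Longrightarrow> step_op \<rho> P f a \<le> step_op \<rho> P g a"
  unfolding step_op_def using Df_nonneg[OF rho, of P a] trans_row_nonneg[of a]
  by (intro mult_left_mono sum_mono) auto

lemma step_op_pow_mono: "(\<And>j. f j \<le> g j) \<Longrightarrow> (step_op \<rho> P ^^ n) f a \<le> (step_op \<rho> P ^^ n) g a"
  by (induction n arbitrary: a) (auto intro: step_op_mono)

lemma step_op_pow_nonneg: "(\<And>j. 0 \<le> g j) \<Longrightarrow> 0 \<le> (step_op \<rho> P ^^ n) g a"
  by (induction n arbitrary: a)
    (auto simp: step_op_def Df_nonneg[OF rho] trans_row_nonneg intro!: mult_nonneg_nonneg sum_nonneg)

lemma step_op_one_le_1: "step_op \<rho> P (\<lambda>_. 1) a \<le> 1"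
  using stochastic[of a] Df_le_1[OF rho, of P a] by (simp add: step_op_def prob_vec_def)

lemma step_op_pow_one_antimono:
  "m \<le> n \<Longrightarrow> (step_op \<rho> P ^^ n) (\<lambda>_. 1) a \<le> (step_op \<rho> P ^^ m) (\<lambda>_. 1) a"
proof (induction n arbitrary: a rule: dec_induct)
  case (step n)
  have "(step_op \<rho> P ^^ Suc n) (\<lambda>_. 1) a \<le> (step_op \<rho> P ^^ n) (\<lambda>_. 1) a"
    unfolding funpow_Suc_right o_def by (rule step_op_pow_mono) (rule step_op_one_le_1)
  then show ?case
    using step.IH[of a] by linarith
qed simp

lemma step_op_pow_one_le_1: "(step_op \<rho> P ^^ n) (\<lambda>_. 1) a \<le> 1"
  using step_op_pow_one_antimono[of 0 n a] by simp

lemma step_op_pow_abs_le: "\<bar>(step_op \<rho> P ^^ n) f a\<bar> \<le> (step_op \<rho> P ^^ n) (\<lambda>j. \<bar>f j\<bar>) a"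
proof -
  have "(step_op \<rho> P ^^ n) f a \<le> (step_op \<rho> P ^^ n) (\<lambda>j. \<bar>f j\<bar>) a"
    by (rule step_op_pow_mono) simp
  moreover have "(step_op \<rho> P ^^ n) (\<lambda>j. -1 * \<bar>f j\<bar>) a \<le> (step_op \<rho> P ^^ n) f a"
    by (rule step_op_pow_mono) simp
  ultimately show ?thesis
    unfolding step_op_pow_cmult by simp
qed

lemma disc_reward_nonneg: "(\<And>j. 0 \<le> g j) \<Longrightarrow> 0 \<le> disc_reward \<rho> P g i \<omega> n"
  unfolding disc_reward_def by (intro mult_nonneg_nonneg prod_nonneg) (auto simp: Df_nonneg[OF rho])

lemma nn_integral_disc_reward:
  assumes g: "\<And>j. 0 \<le> g j"
  shows "(\<integral>\<^sup>+\<omega>. disc_reward \<rho> P g i \<omega> n \<partial>path_space P) = (step_op \<rho> P ^^ n) g i"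
proof (induction n arbitrary: i)
  case 0
  interpret prob_space "path_space P"
    unfolding path_space_def by (intro prob_space.prob_space_stream_space prob_space_measure_pmf)
  show ?case
    by (simp add: disc_reward_def emeasure_space_1)
next
  case (Suc n)
  have "(\<integral>\<^sup>+\<omega>. disc_reward \<rho> P g i \<omega> (Suc n) \<partial>path_space P)
      = (\<integral>\<^sup>+x. (\<integral>\<^sup>+\<omega>. disc_reward \<rho> P g i (x ## \<omega>) (Suc n) \<partial>path_space P) \<partial>measure_pmf (step_pmf P))"
    unfolding path_space_def
    by (rule prob_space.nn_integral_stream_space[OF prob_space_measure_pmf]) measurable
  also have "\<dots> = (\<integral>\<^sup>+x. ennreal (Df \<rho> P i) * ennreal ((step_op \<rho> P ^^ n) g (x i)) \<partial>measure_pmf (step_pmf P))"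
  proof -
    have "ennreal (disc_reward \<rho> P g i (x ## \<omega>) (Suc n))
        = ennreal (Df \<rho> P i) * ennreal (disc_reward \<rho> P g (x i) \<omega> n)" for x \<omega>
      unfolding disc_reward_Stream
      by (intro ennreal_mult Df_nonneg rho disc_reward_nonneg g)
    then show ?thesis
      by (simp add: nn_integral_cmult path_space_def Suc.IH[unfolded path_space_def])
  qed
  also have "\<dots> = (\<Sum>j\<in>UNIV. ennreal (trans_row P i $ j) * (ennreal (Df \<rho> P i) * ennreal ((step_op \<rho> P ^^ n) g j)))"
    by (rule nn_integral_step_pmf)
  also have "\<dots> = (step_op \<rho> P ^^ Suc n) g i"
    using Df_nonneg[OF rho, of P i] trans_row_nonneg[of i] step_op_pow_nonneg[of g n, OF g]
    by (simp add: step_op_def sum_distrib_left mult_ac sum_nonneg flip: ennreal_mult sum_ennreal)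
  finally show ?case .
qed

lemma integral_disc_reward:
  "integrable (path_space P) (\<lambda>\<omega>. disc_reward \<rho> P g i \<omega> n)
   \<and> (\<integral>\<omega>. disc_reward \<rho> P g i \<omega> n \<partial>path_space P) = (step_op \<rho> P ^^ n) g i"
proof -
  have nonneg: "integrable (path_space P) (\<lambda>\<omega>. disc_reward \<rho> P h i \<omega> n)
      \<and> (\<integral>\<omega>. disc_reward \<rho> P h i \<omega> n \<partial>path_space P) = (step_op \<rho> P ^^ n) h i"
    if h: "\<And>j. 0 \<le> h j" for h
    using nn_integral_disc_reward[of h i n, OF h]
    by (subst (asm) nn_integral_eq_integrable)
      (auto simp: path_space_def disc_reward_nonneg[OF h] step_op_pow_nonneg[OF h])
  define gp where "gp j = max (g j) 0" for j
  define gn where "gn j = max (- g j) 0" for j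
  have g: "g = (\<lambda>j. gp j - gn j)"
    by (auto simp: gp_def gn_def)
  have "disc_reward \<rho> P g i \<omega> n = disc_reward \<rho> P gp i \<omega> n - disc_reward \<rho> P gn i \<omega> n" for \<omega>
    by (subst g) (simp add: disc_reward_def left_diff_distrib)
  moreover have "(step_op \<rho> P ^^ n) g i = (step_op \<rho> P ^^ n) gp i - (step_op \<rho> P ^^ n) gn i"
    by (subst g) (simp only: step_op_pow_diff)
  ultimately show ?thesis
    using nonneg[of gp] nonneg[of gn] by (simp add: gp_def gn_def)
qed

end

end

lemma power_div_le_powr:
  fixes q :: real
  assumes q: "0 < q" "q < 1" and N: "0 < N"
  shows "q ^ (n div N) \<le> (1 / q) * (q powr (1 / real N)) ^ n"
proof -
  have "real n = real (n div N) * real N + real (n mod N)"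
    by (metis of_nat_add of_nat_mult div_mult_mod_eq)
  moreover have "real (n mod N) < real N"
    using N by simp
  ultimately have "real n / real N \<le> real (n div N) + 1"
    using N by (simp add: field_simps)
  then have "q powr (real (n div N) + 1) \<le> q powr (real n / real N)"
    using q by (intro powr_mono') auto
  moreover have "q powr (real (n div N) + 1) = q ^ (n div N) * q"
    using q by (simp add: powr_add powr_realpow)
  moreover have "(q powr (1 / real N)) ^ n = q powr (real n / real N)"
    using q by (simp add: powr_realpow[symmetric] powr_powr)
  ultimately show ?thesis
    using q by (simp add: field_simps)
qed

context
  fixes P :: "'m::finite policy" and \<rho> :: real
  assumes stochastic: "\<And>a. prob_vec (trans_row P a)"
    and rho: "0 \<le> \<rho>"
    and transient: "\<And>a. \<exists>n. (step_op \<rho> P ^^ n) (\<lambda>_. 1) a < 1"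
begin

lemma step_op_pow_one_contraction:
  obtains N q where "0 < N" "0 < q" "q < 1" "\<And>a. (step_op \<rho> P ^^ N) (\<lambda>_. 1) a \<le> q"
proof -
  obtain n where n: "\<And>a. (step_op \<rho> P ^^ n a) (\<lambda>_. 1) a < 1"
    using transient by metis
  define N where "N = Suc (Max (range n))"
  have N_less_1: "(step_op \<rho> P ^^ N) (\<lambda>_. 1) a < 1" for a
  proof -
    have "n a \<le> N"
      by (simp add: N_def le_SucI)
    then show ?thesis
      using step_op_pow_one_antimono[OF stochastic rho, of "n a" N a] n[of a] by linarith
  qed
  define q where "q = max (1 / 2) (Max (range (\<lambda>a. (step_op \<rho> P ^^ N) (\<lambda>_. 1) a)))"
  show ?thesis
  proof
    show "0 < N" "0 < q"
      by (simp_all add: N_def q_def)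
    show "q < 1"
      using N_less_1 by (auto simp: q_def Max_less_iff)
    show "(step_op \<rho> P ^^ N) (\<lambda>_. 1) a \<le> q" for a
      by (simp add: q_def le_max_iff_disj)
  qed
qed

lemma step_op_pow_one_geometric:
  obtains C r where "0 < r" "r < 1" "\<And>n a. (step_op \<rho> P ^^ n) (\<lambda>_. 1) a \<le> C * r ^ n"
proof -
  define s where "s n = (step_op \<rho> P ^^ n) (\<lambda>_. 1)" for n
  obtain N q where N: "0 < N" and q: "0 < q" "q < 1" and sN: "\<And>a. s N a \<le> q"
    unfolding s_def using step_op_pow_one_contraction by metis
  have s_step: "s (n + N) a \<le> q * s n a" for n a
  proof -
    have "s (n + N) a = (step_op \<rho> P ^^ n) (s N) a"
      by (simp add: s_def funpow_add)
    also have "\<dots> \<le> (step_op \<rho> P ^^ n) (\<lambda>_. q * 1) a"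
      by (rule step_op_pow_mono[OF stochastic rho]) (simp add: sN)
    also have "\<dots> = q * s n a"
      by (simp only: step_op_pow_cmult s_def)
    finally show ?thesis .
  qed
  have s_blocks: "s (k * N + r) a \<le> q ^ k" for k r a
  proof (induction k arbitrary: a)
    case 0
    then show ?case
      using step_op_pow_one_le_1[OF stochastic rho] by (simp add: s_def)
  next
    case (Suc k)
    have "s (Suc k * N + r) a \<le> q * s (k * N + r) a"
      using s_step[of "k * N + r" a] by (simp add: algebra_simps)
    also have "\<dots> \<le> q * q ^ k"
      using Suc q by (intro mult_left_mono) auto
    finally show ?case
      by simp
  qed
  show ?thesis
  proof (rule that)
    show "0 < q powr (1 / real N)"
      using q by simp
    show "q powr (1 / real N) < 1"
      using powr_less_mono2[of "1 / real N" q 1] q N by simp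
    show "(step_op \<rho> P ^^ n) (\<lambda>_. 1) a \<le> (1 / q) * (q powr (1 / real N)) ^ n" for n a
      using s_blocks[of "n div N" "n mod N" a] power_div_le_powr[OF q N, of n] by (simp add: s_def)
  qed
qed

lemma summable_step_op_pow_abs: "summable (\<lambda>n. (step_op \<rho> P ^^ n) (\<lambda>j. \<bar>g j\<bar>) a)"
proof -
  obtain C r where r: "0 < r" "r < 1" and Cr: "\<And>n a. (step_op \<rho> P ^^ n) (\<lambda>_. 1) a \<le> C * r ^ n"
    using step_op_pow_one_geometric by metis
  define K where "K = (\<Sum>j\<in>UNIV. \<bar>g j\<bar>)"
  have K: "\<bar>g j\<bar> \<le> K * 1" for j
    unfolding K_def using member_le_sum[of j UNIV "\<lambda>j. \<bar>g j\<bar>"] by simp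
  have "0 \<le> K"
    unfolding K_def by (simp add: sum_nonneg)
  have "norm ((step_op \<rho> P ^^ n) (\<lambda>j. \<bar>g j\<bar>) a) \<le> K * C * r ^ n" for n
  proof -
    have "(step_op \<rho> P ^^ n) (\<lambda>j. \<bar>g j\<bar>) a \<le> (step_op \<rho> P ^^ n) (\<lambda>_. K * 1) a"
      by (rule step_op_pow_mono[OF stochastic rho]) (rule K)
    also have "\<dots> = K * (step_op \<rho> P ^^ n) (\<lambda>_. 1) a"
      by (simp only: step_op_pow_cmult)
    also have "\<dots> \<le> K * (C * r ^ n)"
      using Cr \<open>0 \<le> K\<close> by (intro mult_left_mono) auto
    finally show ?thesis
      using step_op_pow_nonneg[OF stochastic rho, of "\<lambda>j. \<bar>g j\<bar>"] by (simp add: mult_ac)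
  qed
  moreover have "summable (\<lambda>n. K * C * r ^ n)"
    using r by (intro summable_mult summable_geometric) auto
  ultimately show ?thesis
    by (rule summable_comparison_test'[where N = 0, rotated])
qed

lemma summable_step_op_pow: "summable (\<lambda>n. (step_op \<rho> P ^^ n) g a)"
  by (rule summable_comparison_test'[OF summable_step_op_pow_abs[of g a], where N = 0])
    (simp add: step_op_pow_abs_le[OF stochastic rho])

lemma AE_summable_disc_reward:
  "AE \<omega> in path_space P. summable (\<lambda>n. \<bar>disc_reward \<rho> P g i \<omega> n\<bar>)"
proof -
  have abs_eq: "\<bar>disc_reward \<rho> P g i \<omega> n\<bar> = disc_reward \<rho> P (\<lambda>j. \<bar>g j\<bar>) i \<omega> n" for \<omega> n
    using Df_nonneg[OF rho, of P] by (simp add: disc_reward_def abs_mult prod_nonneg)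
  have "(\<integral>\<^sup>+\<omega>. (\<Sum>n. ennreal (\<bar>disc_reward \<rho> P g i \<omega> n\<bar>)) \<partial>path_space P)
      = (\<Sum>n. ennreal ((step_op \<rho> P ^^ n) (\<lambda>j. \<bar>g j\<bar>) i))"
    by (simp add: abs_eq nn_integral_suminf path_space_def
        nn_integral_disc_reward[OF stochastic rho, unfolded path_space_def])
  also have "\<dots> \<noteq> top"
    using step_op_pow_nonneg[OF stochastic rho, of "\<lambda>j. \<bar>g j\<bar>"]
    by (intro ennreal_suminf_neq_top summable_step_op_pow_abs) auto
  finally have "AE \<omega> in path_space P. (\<Sum>n. ennreal (\<bar>disc_reward \<rho> P g i \<omega> n\<bar>)) \<noteq> \<infinity>"
    by (intro nn_integral_noteq_infinite) (auto simp: path_space_def)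
  then show ?thesis
    by eventually_elim (simp add: summable_suminf_not_top)
qed

lemma integral_suminf_disc_reward:
  "(\<integral>\<omega>. (\<Sum>n. disc_reward \<rho> P g i \<omega> n) \<partial>path_space P) = (\<Sum>n. (step_op \<rho> P ^^ n) g i)"
proof -
  have "(\<lambda>n. \<integral>\<omega>. disc_reward \<rho> P g i \<omega> n \<partial>path_space P)
      sums (\<integral>\<omega>. (\<Sum>n. disc_reward \<rho> P g i \<omega> n) \<partial>path_space P)"
  proof (rule sums_integral)
    show "integrable (path_space P) (\<lambda>\<omega>. disc_reward \<rho> P g i \<omega> n)" for n
      using integral_disc_reward[OF stochastic rho] by blast
    show "AE \<omega> in path_space P. summable (\<lambda>n. norm (disc_reward \<rho> P g i \<omega> n))"
      using AE_summable_disc_reward by simp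
    have "\<bar>disc_reward \<rho> P g i \<omega> n\<bar> = disc_reward \<rho> P (\<lambda>j. \<bar>g j\<bar>) i \<omega> n" for \<omega> n
      using Df_nonneg[OF rho, of P] by (simp add: disc_reward_def abs_mult prod_nonneg)
    then show "summable (\<lambda>n. \<integral>\<omega>. norm (disc_reward \<rho> P g i \<omega> n) \<partial>path_space P)"
      using summable_step_op_pow_abs integral_disc_reward[OF stochastic rho] by simp
  qed
  then show ?thesis
    using integral_disc_reward[OF stochastic rho] by (simp add: sums_iff)
qed

lemma suminf_step_op_pow_unfold:
  "(\<Sum>n. (step_op \<rho> P ^^ n) g a) = g a + step_op \<rho> P (\<lambda>j. \<Sum>n. (step_op \<rho> P ^^ n) g j) a"
proof -
  have "(\<Sum>n. (step_op \<rho> P ^^ n) g a) = g a + (\<Sum>n. (step_op \<rho> P ^^ Suc n) g a)"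
    using suminf_split_head[OF summable_step_op_pow[of g a]] by simp
  also have "(\<Sum>n. (step_op \<rho> P ^^ Suc n) g a)
      = Df \<rho> P a * (\<Sum>n. \<Sum>j\<in>UNIV. trans_row P a $ j * (step_op \<rho> P ^^ n) g j)"
    by (simp add: step_op_def suminf_mult summable_sum summable_mult summable_step_op_pow)
  also have "(\<Sum>n. \<Sum>j\<in>UNIV. trans_row P a $ j * (step_op \<rho> P ^^ n) g j)
      = (\<Sum>j\<in>UNIV. trans_row P a $ j * (\<Sum>n. (step_op \<rho> P ^^ n) g j))"
    by (simp add: suminf_sum suminf_mult summable_mult summable_step_op_pow)
  finally show ?thesis
    by (simp add: step_op_def[where f = "\<lambda>j. \<Sum>n. (step_op \<rho> P ^^ n) g j"])
qed

end

section \<open>The switching problem\<close>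

lemma prob_vec_mean_ge:
  assumes "prob_vec p" and "\<And>j. m \<le> f j"
  shows "m \<le> (\<Sum>j\<in>UNIV. p $ j * f j)"
proof -
  have "(\<Sum>j\<in>UNIV. p $ j * m) \<le> (\<Sum>j\<in>UNIV. p $ j * f j)"
    using assms by (intro sum_mono mult_left_mono) (auto simp: prob_vec_def)
  then show ?thesis
    using assms(1) by (simp add: prob_vec_def flip: sum_distrib_right)
qed

lemma prob_vec_mean_le_min:
  assumes p: "prob_vec p" and m: "\<And>j. m \<le> f j"
    and mean: "(\<Sum>j\<in>UNIV. p $ j * f j) \<le> m" and j: "p $ j \<noteq> 0"
  shows "f j = m"
proof -
  have "(\<Sum>j\<in>UNIV. p $ j * (f j - m)) = (\<Sum>j\<in>UNIV. p $ j * f j) - m"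
    using p by (simp add: prob_vec_def right_diff_distrib sum_subtractf flip: sum_distrib_right)
  moreover have nonneg: "0 \<le> p $ j * (f j - m)" for j
    using p m by (simp add: prob_vec_def)
  moreover have "0 \<le> (\<Sum>j\<in>UNIV. p $ j * (f j - m))"
    by (rule sum_nonneg) (rule nonneg)
  ultimately have "(\<Sum>j\<in>UNIV. p $ j * (f j - m)) = 0"
    using mean by linarith
  then have "\<forall>j\<in>UNIV. p $ j * (f j - m) = 0"
    using nonneg by (simp add: sum_nonneg_eq_0_iff)
  then show ?thesis
    using j by auto
qed

lemma prob_vec_mean_less_1:
  assumes p: "prob_vec p" and le: "\<And>j. f j \<le> 1" and j: "p $ j \<noteq> 0" "f j < 1"
  shows "(\<Sum>j\<in>UNIV. p $ j * f j) < 1"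
proof (rule ccontr)
  assume "\<not> (\<Sum>j\<in>UNIV. p $ j * f j) < 1"
  then have "(\<Sum>j\<in>UNIV. p $ j * - f j) \<le> -1"
    by (simp add: sum_negf)
  then have "- f j = -1"
    using prob_vec_mean_le_min[OF p _ _ j(1), of "-1" "\<lambda>j. - f j"] le by simp
  then show False
    using j(2) by simp
qed

lemma Psi_mult_nth: "(Psi \<psi> *v y) $ i = \<psi> $ i * y $ i"
proof -
  have "(if i = j then \<psi> $ i else 0) * y $ j = (if i = j then \<psi> $ i * y $ i else 0)" for j
    by simp
  then show ?thesis
    by (simp add: Psi_def matrix_vector_mult_def)
qed

locale switching_mdp =
  fixes \<rho> \<delta> :: real
    and W Z :: "'m::finite \<Rightarrow> (real^'m) set"
    and Ds :: "'m \<Rightarrow> real set"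
    and c k :: "'m \<Rightarrow> real^'m \<Rightarrow> real"
  assumes rho: "0 < \<rho>"
    and delta: "0 < \<delta>"
    and W: "\<And>i. \<forall>p\<in>W i. prob_vec p"
    and Z: "\<And>i. \<forall>p\<in>Z i. prob_vec p"
    and Ds: "\<And>i. Ds i \<subseteq> {0, 1}"
    and reaches_discounting: "\<And>w z \<psi> i. (w, z, \<psi>) \<in> policies W Z Ds \<Longrightarrow> \<psi> $ i = 1 \<Longrightarrow>
      \<exists>j. \<psi> $ j = 0 \<and> (i, j) \<in> {(a, b). Bmat z $ a $ b \<noteq> 0}\<^sup>*"
begin

lemma policy_stochastic:
  assumes "P \<in> policies W Z Ds"
  shows "prob_vec (trans_row P a)"
proof -
  obtain w z \<psi> where P: "P = (w, z, \<psi>)"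
    by (cases P)
  then have "w $ a \<in> W a" "z $ a \<in> Z a"
    using assms by (auto simp: policies_def)
  then show ?thesis
    using W[of a] Z[of a] by (simp add: P trans_row_def)
qed

lemma policy_switch: "(w, z, \<psi>) \<in> policies W Z Ds \<Longrightarrow> \<psi> $ a = 0 \<or> \<psi> $ a = 1"
  using Ds[of a] by (auto simp: policies_def)

definition row_weight :: "'m policy \<Rightarrow> 'm \<Rightarrow> real" where
  "row_weight P i = (case P of (w, z, \<psi>) \<Rightarrow> if \<psi> $ i = 0 then 1 else \<delta>)"

lemma row_weight_pos: "0 < row_weight P i"
  using delta by (auto simp: row_weight_def split: prod.splits)

lemma Amat_mult_nth:
  assumes "P \<in> policies W Z Ds"
  shows "(Amat \<rho> \<delta> P *v x) $ i = row_weight P i * (x $ i - step_op \<rho> P (($) x) i)"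
proof -
  obtain w z \<psi> where P: "P = (w, z, \<psi>)"
    by (cases P)
  have A: "Amat \<rho> \<delta> P *v x
      = (mat 1 - Psi \<psi>) *v (x - Lmat \<rho> w *v x) + \<delta> *\<^sub>R (Psi \<psi> *v (x - Bmat z *v x))"
    by (simp add: Amat_def P matrix_vector_mult_add_rdistrib matrix_vector_mult_diff_rdistrib
        matrix_vector_mul_assoc[symmetric] scaleR_matrix_vector_assoc[symmetric])
  have "(Lmat \<rho> w *v x) $ i = (\<Sum>j\<in>UNIV. w $ i $ j * x $ j) / (1 + \<rho>)"
    by (simp add: Lmat_def matrix_vector_mult_def sum_divide_distrib)
  moreover have "(Bmat z *v x) $ i = (\<Sum>j\<in>UNIV. z $ i $ j * x $ j)"
    by (simp add: Bmat_def matrix_vector_mult_def)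
  moreover have "\<psi> $ i = 0 \<or> \<psi> $ i = 1"
    using assms P policy_switch by blast
  ultimately show ?thesis
    unfolding A
    by (auto simp: P Psi_mult_nth row_weight_def step_op_def Df_def trans_row_def
        matrix_vector_mult_diff_rdistrib algebra_simps sum_divide_distrib)
qed

lemma bvec_nth:
  assumes "P \<in> policies W Z Ds"
  shows "bvec \<delta> c k P $ i = row_weight P i * Uf c k P i"
proof -
  obtain w z \<psi> where P: "P = (w, z, \<psi>)"
    by (cases P)
  have "\<psi> $ i = 0 \<or> \<psi> $ i = 1"
    using assms P policy_switch by blast
  then show ?thesis
    by (auto simp: bvec_def P Psi_mult_nth row_weight_def Uf_def cvec_def matrix_vector_mult_diff_rdistrib)
qed

lemma minimum_spreads:
  assumes P: "(w, z, \<psi>) \<in> policies W Z Ds"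
    and m: "\<And>j. m \<le> f j" "m < 0"
    and a: "f a = m" "step_op \<rho> (w, z, \<psi>) f a \<le> f a"
  shows "\<psi> $ a = 1 \<and> (\<forall>j. z $ a $ j \<noteq> 0 \<longrightarrow> f j = m)"
proof -
  let ?P = "(w, z, \<psi>)"
  have mean: "m \<le> (\<Sum>j\<in>UNIV. trans_row ?P a $ j * f j)"
    using prob_vec_mean_ge[OF policy_stochastic[OF P] m(1)] .
  show ?thesis
  proof (cases "\<psi> $ a = 0")
    case True
    then have "(\<Sum>j\<in>UNIV. trans_row ?P a $ j * f j) \<le> m * (1 + \<rho>)"
      using a rho by (simp add: step_op_def Df_def field_simps)
    then have "0 \<le> m * \<rho>"
      using mean by (simp add: algebra_simps)
    then show ?thesis
      using m(2) rho by (simp add: zero_le_mult_iff)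
  next
    case False
    then have \<psi>: "\<psi> $ a = 1"
      using policy_switch[OF P] by blast
    have row: "trans_row ?P a = z $ a"
      using \<psi> by (simp add: trans_row_def)
    have mean_le: "(\<Sum>j\<in>UNIV. trans_row ?P a $ j * f j) \<le> m"
      using a \<psi> by (simp add: step_op_def Df_def)
    have "f j = m" if "z $ a $ j \<noteq> 0" for j
      using prob_vec_mean_le_min[OF policy_stochastic[OF P, of a], of m f j, OF m(1) mean_le] that row
      by simp
    then show ?thesis
      using \<psi> by blast
  qed
qed

lemma excessive_nonneg:
  assumes P: "P \<in> policies W Z Ds" and excessive: "\<And>a. step_op \<rho> P f a \<le> f a"
  shows "0 \<le> f i"
proof (rule ccontr)
  assume "\<not> 0 \<le> f i"
  obtain w z \<psi> where P_eq: "P = (w, z, \<psi>)"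
    by (cases P)
  define m where "m = Min (range f)"
  have m_le: "m \<le> f j" for j
    by (simp add: m_def)
  have "m < 0"
    using \<open>\<not> 0 \<le> f i\<close> m_le[of i] by linarith
  note m = m_le this
  have "m \<in> range f"
    unfolding m_def by (rule Min_in) auto
  then obtain i0 where i0: "f i0 = m"
    by auto
  note spreads = minimum_spreads[OF P[unfolded P_eq] m _ excessive[unfolded P_eq]]
  obtain j where j: "\<psi> $ j = 0" and path: "(i0, j) \<in> {(a, b). Bmat z $ a $ b \<noteq> 0}\<^sup>*"
    using reaches_discounting[OF P[unfolded P_eq]] spreads[OF i0] by blast
  from path have "f j = m"
  proof (induction rule: rtrancl_induct)
    case (step a b)
    then show ?case
      using spreads[OF step.IH] by (simp add: Bmat_def)
  qed (rule i0)
  then show False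
    using spreads[of j] j by simp
qed

lemma Amat_monotone:
  assumes P: "P \<in> policies W Z Ds"
  shows "monotone_matrix (Amat \<rho> \<delta> P)"
  unfolding monotone_matrix_def
proof (intro allI impI)
  fix x :: "real^'m"
  assume "0 \<le> Amat \<rho> \<delta> P *v x"
  then have "step_op \<rho> P (($) x) a \<le> x $ a" for a
    using row_weight_pos[of P a] by (auto simp: less_eq_vec_def Amat_mult_nth[OF P] zero_le_mult_iff)
  then show "0 \<le> x"
    using excessive_nonneg[OF P] by (simp add: less_eq_vec_def)
qed

lemma policy_transient:
  assumes P: "P \<in> policies W Z Ds"
  shows "\<exists>n. (step_op \<rho> P ^^ n) (\<lambda>_. 1) a < 1"
proof -
  obtain w z \<psi> where P_eq: "P = (w, z, \<psi>)"
    by (cases P)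
  have stochastic: "\<And>a. prob_vec (trans_row P a)"
    using policy_stochastic[OF P] .
  have discounting: "\<exists>n. (step_op \<rho> P ^^ n) (\<lambda>_. 1) b < 1" if "\<psi> $ b = 0" for b
    using that stochastic[of b] rho
    by (intro exI[of _ 1]) (simp add: step_op_def Df_def P_eq prob_vec_def)
  have switching: "\<exists>n. (step_op \<rho> P ^^ n) (\<lambda>_. 1) b < 1"
    if "\<psi> $ b = 1" "z $ b $ b' \<noteq> 0" "(step_op \<rho> P ^^ n) (\<lambda>_. 1) b' < 1" for b b' n
  proof -
    have "(step_op \<rho> P ^^ Suc n) (\<lambda>_. 1) b = (\<Sum>j\<in>UNIV. z $ b $ j * (step_op \<rho> P ^^ n) (\<lambda>_. 1) j)"
      using that(1) by (simp add: step_op_def Df_def P_eq trans_row_def)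
    also have "\<dots> < 1"
      using that stochastic[of b] step_op_pow_one_le_1[OF stochastic less_imp_le[OF rho]]
      by (intro prob_vec_mean_less_1) (auto simp: P_eq trans_row_def)
    finally show ?thesis ..
  qed
  show ?thesis
  proof (cases "\<psi> $ a = 0")
    case False
    then obtain j where j: "\<psi> $ j = 0" and path: "(a, j) \<in> {(a, b). Bmat z $ a $ b \<noteq> 0}\<^sup>*"
      using reaches_discounting[OF P[unfolded P_eq]] policy_switch[OF P[unfolded P_eq]] by blast
    from path show ?thesis
    proof (induction rule: converse_rtrancl_induct)
      case (step y y')
      show ?case
      proof (cases "\<psi> $ y = 0")
        case False
        then have "\<psi> $ y = 1"
          using policy_switch[OF P[unfolded P_eq]] by blast
        moreover have "z $ y $ y' \<noteq> 0"
          using step.hyps(1) by (simp add: Bmat_def)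
        ultimately show ?thesis
          using step.IH switching by blast
      qed (rule discounting)
    qed (rule discounting[OF j])
  qed (rule discounting)
qed

lemma value_solves:
  assumes P: "P \<in> policies W Z Ds"
  shows "Amat \<rho> \<delta> P *v (\<chi> i. mdp_value \<rho> c k P i) = bvec \<delta> c k P"
proof -
  note transient_policy = policy_stochastic[OF P] less_imp_le[OF rho] policy_transient[OF P]
  define v where "v = (\<lambda>j. \<Sum>n. (step_op \<rho> P ^^ n) (Uf c k P) j)"
  have "mdp_value \<rho> c k P i = v i" for i
    using integral_suminf_disc_reward[OF transient_policy, of "Uf c k P" i]
    by (simp add: mdp_value_def disc_reward_def v_def)
  then have "($) (\<chi> i. mdp_value \<rho> c k P i) = v"
    by auto
  moreover have "v i - step_op \<rho> P v i = Uf c k P i" for i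
    using suminf_step_op_pow_unfold[OF transient_policy, of "Uf c k P" i] by (simp add: v_def)
  ultimately show ?thesis
    by (simp add: vec_eq_iff Amat_mult_nth[OF P] bvec_nth[OF P])
qed

end

theorem corollary4p4:
  fixes \<rho> \<delta> :: real
    and W Z :: "'m::finite \<Rightarrow> (real^'m) set"
    and Ds :: "'m \<Rightarrow> real set"
    and c k :: "'m \<Rightarrow> real^'m \<Rightarrow> real"
    and v0 :: "real^'m"
    and Ps :: "nat \<Rightarrow> 'm policy"
    and vs :: "nat \<Rightarrow> real^'m"
  assumes rho: "\<rho> > 0"
    and delta: "\<delta> > 0"
    and W: "\<And>i. W i \<noteq> {} \<and> (\<forall>p\<in>W i. prob_vec p)"
    and Z: "\<And>i. Z i \<noteq> {} \<and> (\<forall>p\<in>Z i. prob_vec p)"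
    and Ds: "\<And>i. Ds i \<noteq> {} \<and> Ds i \<subseteq> {0, 1}"
    and H0: "bounded ((\<lambda>P. matrix_inv (Amat \<rho> \<delta> P)) ` {P \<in> policies W Z Ds. invertible (Amat \<rho> \<delta> P)})"
    and H1i: "bounded (Amat \<rho> \<delta> ` policies W Z Ds) \<and> bounded (bvec \<delta> c k ` policies W Z Ds)"
    and H1ii: "\<And>x. \<exists>P\<in>policies W Z Ds.
                 - (Amat \<rho> \<delta> P *v x) + bvec \<delta> c k P
                 = supv (policies W Z Ds) (\<lambda>Q. - (Amat \<rho> \<delta> Q *v x) + bvec \<delta> c k Q)"
    and H2: "\<And>w z \<psi> i. (w, z, \<psi>) \<in> policies W Z Ds \<Longrightarrow> \<psi>$i = 1 \<Longrightarrow>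
               \<exists>j. \<psi>$j = 0 \<and> (i, j) \<in> {(a, b). Bmat z $ a $ b \<noteq> 0}\<^sup>*"
    and init: "vs 0 = v0"
    and PI: "\<And>l. l \<ge> 1 \<Longrightarrow>
               Ps l \<in> policies W Z Ds
             \<and> - (Amat \<rho> \<delta> (Ps l) *v vs (l - 1)) + bvec \<delta> c k (Ps l)
                 = supv (policies W Z Ds) (\<lambda>Q. - (Amat \<rho> \<delta> Q *v vs (l - 1)) + bvec \<delta> c k Q)
             \<and> Amat \<rho> \<delta> (Ps l) *v vs l = bvec \<delta> c k (Ps l)"
  shows "vs \<longlonglongrightarrow> (\<chi> i. SUP P\<in>policies W Z Ds. mdp_value \<rho> c k P i)"
proof -
  interpret switching_mdp \<rho> \<delta> W Z Ds c k
    using rho delta W Z Ds H2 by unfold_locales blast+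
  have "{P \<in> policies W Z Ds. invertible (Amat \<rho> \<delta> P)} = policies W Z Ds"
    using Amat_monotone monotone_matrix_invertible by blast
  then interpret policy_iteration "policies W Z Ds" "Amat \<rho> \<delta>" "bvec \<delta> c k"
    using H0 H1i H1ii by unfold_locales (auto simp: Amat_monotone)
  interpret policy_iteration_run "policies W Z Ds" "Amat \<rho> \<delta>" "bvec \<delta> c k" Ps vs
    using PI[of "Suc l" for l] by unfold_locales (auto simp: residual_def[abs_def])
  show ?thesis
    using policy_iteration_converges[of "\<lambda>P. \<chi> i. mdp_value \<rho> c k P i"] value_solves by simp
qed

end
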